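(* Let $W,W_1,W_2,\dots$ be random variables with finite $p$th absolute moments, where $1\le p<\infty$. Suppose that $W$ has an absolutely continuous distribution and that, for each $n\ge1$, there is a real constant $b_n$ such that $n(W_n-b_n)$ is integer-valued. Then $$\liminf_{n\to\infty} n\,d_p(W_n,W)\ge \frac12 (p+1)^{-1/p}.$$ In particular, $d_p(W_n,W)=\Omega(1/n)$.
   Context: For $1\le p<\infty$, $d_p(X,Y):=\min\|X'-Y'\|_p$, the minimum taken over all couplings $(X',Y')$ on a common probability space with $X'\stackrel{d}{=}X$ and $Y'\stackrel{d}{=}Y$. *)

theory Defs
  imports "HOL-Probability.Probability"
begin

text \<open>Distributions on the real line: library locale real_distribution
  (probability measures on the Borel sets).\<close>

definition coupling :: "(real \<times> real) measure \<Rightarrow> real measure \<Rightarrow> real measure \<Rightarrow> bool" where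
  "coupling \<gamma> \<mu> \<nu> \<longleftrightarrow> prob_space \<gamma> \<and> sets \<gamma> = sets (borel \<Otimes>\<^sub>M borel)
     \<and> distr \<gamma> borel fst = \<mu> \<and> distr \<gamma> borel snd = \<nu>"

definition wasserstein :: "real \<Rightarrow> real measure \<Rightarrow> real measure \<Rightarrow> real" where
  "wasserstein p \<mu> \<nu> = Inf {(\<integral>z. \<bar>fst z - snd z\<bar> powr p \<partial>\<gamma>) powr (1 / p) | \<gamma>.
       coupling \<gamma> \<mu> \<nu> \<and> integrable \<gamma> (\<lambda>z. \<bar>fst z - snd z\<bar> powr p)}"

end

theory Submission
  imports Defs
begin

(* If n (X - b) is an integer, then |X - Y| is at least dist_Ints (n Y - n b) / n, where
   dist_Ints is the distance to the nearest integer.  Hence every coupling of W_n and W has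
   E |X - Y|^p >= n^-p E s (n W - n b_n), with s = dist_Ints^p a 1-periodic, Lipschitz sawtooth
   whose mean over a period is 2^-p / (p + 1).  Since W has a density f, the integrals of
   s (n y - c) f y approach this mean: averaging over the m shifts y + k / (m n) turns s (n y - c)
   into a Riemann sum of s, which is at least its mean minus p / m, and each shift changes the
   integral by at most the L^1 distance between f and its translate by k / (m n), which tends
   to 0 as n grows. *)

section \<open>Distance to the nearest integer\<close>

definition dist_Ints :: "real \<Rightarrow> real" where
  "dist_Ints t = min (frac t) (1 - frac t)"

lemma dist_Ints_nonneg: "0 \<le> dist_Ints t"
  unfolding dist_Ints_def using frac_lt_1[of t] frac_ge_0[of t] by simp

lemma dist_Ints_le_half: "dist_Ints t \<le> 1/2"
  unfolding dist_Ints_def by (simp add: min_def)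

lemma dist_Ints_le:
  assumes "x \<in> \<int>"
  shows "dist_Ints t \<le> \<bar>t - x\<bar>"
proof -
  obtain k where k: "x = of_int k" using assms Ints_cases by blast
  show ?thesis
  proof (cases "k \<le> floor t")
    case True
    then have "frac t \<le> \<bar>t - x\<bar>" using k by (simp add: frac_def)
    then show ?thesis unfolding dist_Ints_def by simp
  next
    case False
    then have "1 - frac t \<le> \<bar>t - x\<bar>" using k floor_le_iff[of t] by (simp add: frac_def)
    then show ?thesis unfolding dist_Ints_def by simp
  qed
qed

lemma dist_Ints_attained: "\<exists>x\<in>\<int>. dist_Ints t = \<bar>t - x\<bar>"
proof (cases "frac t \<le> 1 - frac t")
  case True
  then have "dist_Ints t = \<bar>t - of_int (floor t)\<bar>" unfolding dist_Ints_def by (simp add: frac_def)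
  then show ?thesis by (meson Ints_of_int)
next
  case False
  then have "dist_Ints t = \<bar>t - (of_int (floor t) + 1)\<bar>" unfolding dist_Ints_def
    using frac_lt_1[of t] by (simp add: frac_def)
  then show ?thesis by (metis Ints_1 Ints_add Ints_of_int)
qed

lemma dist_Ints_le_add_abs_diff: "dist_Ints s \<le> dist_Ints t + \<bar>s - t\<bar>"
proof -
  obtain x where x: "x \<in> \<int>" "dist_Ints t = \<bar>t - x\<bar>" using dist_Ints_attained by blast
  have "dist_Ints s \<le> \<bar>s - x\<bar>" using dist_Ints_le[OF x(1)] .
  also have "\<dots> \<le> \<bar>s - t\<bar> + \<bar>t - x\<bar>" by simp
  finally show ?thesis using x by simp
qed

lemma dist_Ints_add_1: "dist_Ints (t + 1) = dist_Ints t"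
  unfolding dist_Ints_def by (simp add: frac_1_eq)

lemma dist_Ints_eq_abs:
  assumes "\<bar>t\<bar> \<le> 1/2"
  shows "dist_Ints t = \<bar>t\<bar>"
proof (cases "0 \<le> t")
  case False
  then have "\<lfloor>t\<rfloor> = -1" using assms by (simp add: floor_eq_iff)
  then show ?thesis using False assms unfolding dist_Ints_def frac_def by simp
qed (use assms in \<open>simp add: dist_Ints_def frac_eq\<close>)

lemma powr_diff_le_mult_diff:
  fixes a b p :: real
  assumes "0 \<le> a" "a \<le> b" "b \<le> 1" "1 \<le> p"
  shows "b powr p - a powr p \<le> p * (b - a)"
proof (cases "a = b")
  case False
  then have ab: "a < b" using assms by simp
  have deriv: "((\<lambda>x. x powr p) has_real_derivative p * x powr (p - 1)) (at x)" if "0 < x" for x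
    using that by (intro derivative_eq_intros) (auto simp: powr_diff)
  have "continuous_on {a..b} (\<lambda>x. x powr p)"
    using assms by (intro continuous_on_powr') (auto intro: continuous_intros)
  moreover have "(\<lambda>x. x powr p) differentiable (at x)" if "a < x" for x
    using assms deriv that unfolding real_differentiable_def by (meson le_less_trans)
  ultimately obtain l z where z: "a < z" "z < b"
    and l: "((\<lambda>x. x powr p) has_real_derivative l) (at z)" "b powr p - a powr p = (b - a) * l"
    using MVT[OF ab] by blast
  have "l = p * z powr (p - 1)"
    using DERIV_unique[OF l(1) deriv] z assms by simp
  moreover have "z powr (p - 1) \<le> 1" using z assms by (intro powr_le1) auto
  ultimately have "l \<le> p" using assms by (simp add: mult_left_le)
  then show ?thesis using l(2) ab by (simp add: mult_left_mono mult.commute)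
qed simp

definition sawtooth :: "real \<Rightarrow> real \<Rightarrow> real" where
  "sawtooth p t = dist_Ints t powr p"

lemma sawtooth_nonneg: "0 \<le> sawtooth p t"
  unfolding sawtooth_def by simp

lemma sawtooth_le_1: "0 \<le> p \<Longrightarrow> sawtooth p t \<le> 1"
  unfolding sawtooth_def using dist_Ints_nonneg[of t] dist_Ints_le_half[of t]
  by (intro powr_le1) auto

lemma sawtooth_add_1: "sawtooth p (t + 1) = sawtooth p t"
  unfolding sawtooth_def by (simp add: dist_Ints_add_1)

lemma sawtooth_lipschitz:
  assumes "1 \<le> p"
  shows "p-lipschitz_on UNIV (sawtooth p)"
proof (rule lipschitz_onI)
  have le: "sawtooth p s - sawtooth p t \<le> p * \<bar>s - t\<bar>" if "dist_Ints t \<le> dist_Ints s" for s t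
  proof -
    have "sawtooth p s - sawtooth p t \<le> p * (dist_Ints s - dist_Ints t)" unfolding sawtooth_def
      using powr_diff_le_mult_diff that assms dist_Ints_nonneg[of t] dist_Ints_le_half[of s] by simp
    also have "\<dots> \<le> p * \<bar>s - t\<bar>"
      using dist_Ints_le_add_abs_diff[of s t] assms by (intro mult_left_mono) auto
    finally show ?thesis .
  qed
  have mono: "sawtooth p t \<le> sawtooth p s" if "dist_Ints t \<le> dist_Ints s" for s t
    unfolding sawtooth_def using that dist_Ints_nonneg[of t] assms by (intro powr_mono2) auto
  show "dist (sawtooth p s) (sawtooth p t) \<le> p * dist s t" for s t
    using le[of t s] le[of s t] mono[of t s] mono[of s t] unfolding dist_real_def
    by (cases "dist_Ints t \<le> dist_Ints s") (auto simp: abs_minus_commute)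
qed (use assms in simp)

lemma borel_measurable_sawtooth [measurable]: "sawtooth p \<in> borel_measurable borel"
  unfolding sawtooth_def dist_Ints_def frac_def by measurable

lemma sawtooth_le_lattice_dist:
  fixes a b x y p :: real
  assumes a: "0 < a" and p: "0 \<le> p" and lattice: "a * (x - b) \<in> \<int>"
  shows "sawtooth p (a * y - a * b) / a powr p \<le> \<bar>x - y\<bar> powr p"
proof -
  have "dist_Ints (a * y - a * b) \<le> \<bar>(a * y - a * b) - a * (x - b)\<bar>"
    by (rule dist_Ints_le[OF lattice])
  also have "(a * y - a * b) - a * (x - b) = a * (y - x)"
    by (simp add: algebra_simps)
  also have "\<bar>a * (y - x)\<bar> = a * \<bar>x - y\<bar>"
    using a by (simp add: abs_mult abs_minus_commute)
  finally have "dist_Ints (a * y - a * b) / a \<le> \<bar>x - y\<bar>"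
    using a by (simp add: divide_le_eq mult.commute)
  then have "(dist_Ints (a * y - a * b) / a) powr p \<le> \<bar>x - y\<bar> powr p"
    using p a dist_Ints_nonneg by (intro powr_mono2) auto
  then show ?thesis
    unfolding sawtooth_def using a dist_Ints_nonneg by (simp add: powr_divide)
qed

section \<open>Periodic Lipschitz functions\<close>

lemma periodic_add_of_int:
  assumes "\<And>t. g (t + 1) = g t"
  shows "g (t + of_int k) = g t"
proof (induction k rule: int_induct[where k = 0])
  case (step1 i)
  then show ?case using assms[of "t + of_int i"] by (simp add: add.assoc)
next
  case (step2 i)
  then show ?case using assms[of "t + of_int (i - 1)"] by (simp add: add.assoc)
qed simp

lemma integral_periodic_unit_interval:
  fixes g :: "real \<Rightarrow> real"
  assumes cont: "continuous_on UNIV g" and periodic: "\<And>t. g (t + 1) = g t"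
  shows "integral {z..z+1} g = integral {0..1} g"
proof -
  define N where "N = real_of_int \<lfloor>z\<rfloor>"
  have N: "N \<le> z" "z \<le> N + 1" unfolding N_def by linarith+
  have combine: "integral {a..c} g + integral {c..b} g = integral {a..b} g"
    if "a \<le> c" "c \<le> b" for a b c
    using that
    by (intro Henstock_Kurzweil_Integration.integral_combine integrable_continuous_real
        continuous_on_subset[OF cont]) auto
  have shift: "integral {a + of_int k..b + of_int k} g = integral {a..b} g" for a b k
  proof -
    have "g \<circ> (+) (of_int k) = g"
      by (rule ext) (simp add: periodic_add_of_int[where g = g, OF periodic] add.commute)
    then show ?thesis using integral_shift_Icc_real[of a b g "of_int k"] by simp
  qed
  have "integral {z..z+1} g = integral {z..N + 1} g + integral {N + 1..z + 1} g"
    using combine N by simp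
  also have "integral {N + 1..z + 1} g = integral {N..z} g"
    using shift[of N 1 z] by simp
  also have "integral {z..N + 1} g + integral {N..z} g = integral {N..N + 1} g"
    using combine[of N z "N + 1"] N by linarith
  also have "\<dots> = integral {0..1} g"
    using shift[of 0 "\<lfloor>z\<rfloor>" 1] unfolding N_def by (simp add: add.commute)
  finally show ?thesis .
qed

lemma integral_le_lipschitz_left_endpoint:
  fixes g :: "real \<Rightarrow> real"
  assumes "L-lipschitz_on {a..a+h} g" "0 \<le> h"
  shows "integral {a..a+h} g \<le> h * (g a + L * h)"
proof -
  have "integral {a..a+h} g \<le> integral {a..a+h} (\<lambda>x. g a + L * h)"
  proof (rule integral_le)
    show "g integrable_on {a..a+h}"
      using assms by (intro integrable_continuous_real lipschitz_on_continuous_on)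
    fix x assume "x \<in> {a..a+h}"
    then have "\<bar>g x - g a\<bar> \<le> L * \<bar>x - a\<bar>" "L * \<bar>x - a\<bar> \<le> L * h"
      using assms lipschitz_onD[OF assms(1), of x a] lipschitz_on_nonneg[OF assms(1)]
      by (auto simp: dist_real_def intro: mult_left_mono)
    then show "g x \<le> g a + L * h" by linarith
  qed auto
  then show ?thesis using assms by simp
qed

lemma riemann_sum_ge_periodic:
  fixes g :: "real \<Rightarrow> real"
  assumes lip: "L-lipschitz_on UNIV g" and periodic: "\<And>t. g (t + 1) = g t" and m: "0 < m"
  shows "integral {0..1} g - L / real m \<le> (\<Sum>k<m. g (z + real k / real m)) / real m"
proof -
  define x where "x k = z + real k / real m" for k
  have step: "x (Suc k) = x k + 1 / real m" for k
    unfolding x_def using m by (simp add: field_simps)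
  have telescope: "integral {z..x j} g = (\<Sum>k<j. integral {x k..x (Suc k)} g)" for j
  proof (induction j)
    case (Suc j)
    have "integral {z..x j} g + integral {x j..x (Suc j)} g = integral {z..x (Suc j)} g"
      using lipschitz_on_continuous_on[OF lip] m unfolding x_def
      by (intro Henstock_Kurzweil_Integration.integral_combine integrable_continuous_real)
        (auto simp: divide_right_mono intro: continuous_on_subset)
    then show ?case using Suc by simp
  qed (simp add: x_def)
  have "integral {0..1} g = integral {z..x m} g"
    using integral_periodic_unit_interval[OF lipschitz_on_continuous_on[OF lip] periodic] m
    by (simp add: x_def)
  also have "\<dots> \<le> (\<Sum>k<m. (1 / real m) * (g (x k) + L * (1 / real m)))"
    unfolding telescope step
    by (intro sum_mono integral_le_lipschitz_left_endpoint lipschitz_on_subset[OF lip]) auto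
  also have "\<dots> = (\<Sum>k<m. g (x k)) / real m + L / real m"
    by (simp add: distrib_left sum.distrib sum_divide_distrib)
  finally show ?thesis unfolding x_def by simp
qed

lemma sawtooth_eq_abs_powr: "\<bar>t\<bar> \<le> 1/2 \<Longrightarrow> sawtooth p t = \<bar>t\<bar> powr p"
  unfolding sawtooth_def by (simp add: dist_Ints_eq_abs)

lemma integral_sawtooth:
  assumes p: "1 \<le> p"
  shows "integral {0..1} (sawtooth p) = (1/2) powr p / (p + 1)"
proof -
  have cont: "continuous_on UNIV (sawtooth p)"
    using sawtooth_lipschitz[OF p] by (rule lipschitz_on_continuous_on)
  define I where "I = (1/2) powr (p + 1) / (p + 1)"
  have half: "((\<lambda>t. t powr p) has_integral I) {0..1/2}"
    unfolding I_def using p by (intro has_integral_powr_from_0) auto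
  have right: "integral {0..1/2} (sawtooth p) = I"
  proof -
    have "integral {0..1/2} (sawtooth p) = integral {0..1/2} (\<lambda>t. t powr p)"
      by (rule integral_cong) (simp add: sawtooth_eq_abs_powr)
    then show ?thesis using half by (simp add: integral_unique)
  qed
  have left: "integral {-1/2..0} (sawtooth p) = I"
  proof -
    have "integral {-1/2..0} (sawtooth p) = integral {-1/2..0} (\<lambda>t. (-t) powr p)"
      by (rule integral_cong) (simp add: sawtooth_eq_abs_powr)
    moreover have "integral {-(1/2)..-0} (\<lambda>t. (-t) powr p) = integral {0..1/2} (\<lambda>t. t powr p)"
      by (rule Henstock_Kurzweil_Integration.integral_reflect_real)
    ultimately show ?thesis using half by (simp add: integral_unique)
  qed
  have "integral {0..1} (sawtooth p) = integral {-1/2..1/2} (sawtooth p)"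
    using integral_periodic_unit_interval[OF cont sawtooth_add_1, of "-1/2"] by simp
  also have "\<dots> = integral {-1/2..0} (sawtooth p) + integral {0..1/2} (sawtooth p)"
    by (intro Henstock_Kurzweil_Integration.integral_combine[symmetric] integrable_continuous_real
        continuous_on_subset[OF cont]) auto
  also have "\<dots> = 2 * ((1/2) powr p * (1/2) / (p + 1))"
    unfolding left right I_def by (simp add: powr_add)
  also have "\<dots> = (1/2) powr p / (p + 1)"
    using p by (simp add: divide_simps)
  finally show ?thesis .
qed

section \<open>Continuity of translation in L1\<close>

lemma integrable_lborel_shift:
  fixes f :: "real \<Rightarrow> 'a::{banach, second_countable_topology}"
  shows "integrable lborel f \<Longrightarrow> integrable lborel (\<lambda>y. f (y + t))"
  using lborel_integrable_real_affine_iff[of 1 f t] by (simp add: add.commute)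

lemma integral_lborel_shift:
  fixes f :: "real \<Rightarrow> 'a::{banach, second_countable_topology}"
  shows "(\<integral>y. f (y + t) \<partial>lborel) = (\<integral>y. f y \<partial>lborel)"
  using lborel_integral_real_affine[of 1 f t] by (simp add: add.commute)

definition translate_dist :: "(real \<Rightarrow> real) \<Rightarrow> real \<Rightarrow> real" where
  "translate_dist f t = (\<integral>y. \<bar>f (y + t) - f y\<bar> \<partial>lborel)"

lemma integrable_translate_diff:
  fixes f :: "real \<Rightarrow> real"
  assumes "integrable lborel f"
  shows "integrable lborel (\<lambda>y. \<bar>f (y + t) - f y\<bar>)"
  by (intro integrable_abs Bochner_Integration.integrable_diff integrable_lborel_shift[OF assms]
      assms)

lemma translate_dist_nonneg: "0 \<le> translate_dist f t"
  unfolding translate_dist_def by simp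

lemma translate_dist_mult_left: "translate_dist (\<lambda>x. c * f x) t = \<bar>c\<bar> * translate_dist f t"
proof -
  have "\<bar>c * f (y + t) - c * f y\<bar> = \<bar>c\<bar> * \<bar>f (y + t) - f y\<bar>" for y
    by (simp add: abs_mult flip: right_diff_distrib)
  then show ?thesis unfolding translate_dist_def by simp
qed

lemma translate_dist_add_le:
  assumes f: "integrable lborel f" and g: "integrable lborel g"
  shows "translate_dist (\<lambda>x. f x + g x) t \<le> translate_dist f t + translate_dist g t"
proof -
  have "translate_dist (\<lambda>x. f x + g x) t \<le> (\<integral>y. \<bar>f (y + t) - f y\<bar> + \<bar>g (y + t) - g y\<bar> \<partial>lborel)"
    unfolding translate_dist_def
    by (rule integral_mono) (use f g in \<open>auto intro: integrable_translate_diff\<close>)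
  also have "\<dots> = translate_dist f t + translate_dist g t"
    unfolding translate_dist_def using f g by (simp add: integrable_translate_diff)
  finally show ?thesis .
qed

lemma translate_dist_le:
  assumes f: "integrable lborel f" and g: "integrable lborel g"
  shows "translate_dist f t \<le> 2 * (\<integral>y. \<bar>f y - g y\<bar> \<partial>lborel) + translate_dist g t"
proof -
  have fg: "integrable lborel (\<lambda>y. \<bar>f y - g y\<bar>)" "integrable lborel (\<lambda>y. \<bar>f (y + t) - g (y + t)\<bar>)"
    using integrable_lborel_shift[of "\<lambda>y. \<bar>f y - g y\<bar>" t] f g by auto
  have "translate_dist f t
      \<le> (\<integral>y. \<bar>f (y + t) - g (y + t)\<bar> + \<bar>g (y + t) - g y\<bar> + \<bar>f y - g y\<bar> \<partial>lborel)"
    unfolding translate_dist_def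
    by (rule integral_mono) (use f g fg in \<open>auto simp: integrable_translate_diff\<close>)
  also have "\<dots> = 2 * (\<integral>y. \<bar>f y - g y\<bar> \<partial>lborel) + translate_dist g t"
    using fg g integral_lborel_shift[of "\<lambda>y. \<bar>f y - g y\<bar>" t]
    unfolding translate_dist_def by (simp add: integrable_translate_diff)
  finally show ?thesis .
qed

lemma tendsto_overlap_open:
  fixes U :: "real set" and t :: "nat \<Rightarrow> real"
  assumes U: "open U" "emeasure lborel U < \<infinity>" and t: "t \<longlonglongrightarrow> 0"
  shows "(\<lambda>k. \<integral>y. indicator U (y + t k) * indicator U y \<partial>lborel) \<longlonglongrightarrow> measure lborel U"
proof -
  have [measurable]: "U \<in> sets borel" using U by simp
  have "(\<lambda>k. \<integral>y. indicator U (y + t k) * indicator U y \<partial>lborel) \<longlonglongrightarrow> (\<integral>y. indicat_real U y \<partial>lborel)"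
  proof (rule integral_dominated_convergence[where w = "indicat_real U" and f = "indicat_real U"
        and s = "\<lambda>k y. indicator U (y + t k) * indicat_real U y"])
    show "integrable lborel (indicat_real U)"
      using U by (simp add: integrable_indicator_iff)
    show "AE y in lborel. (\<lambda>k. indicator U (y + t k) * indicator U y) \<longlonglongrightarrow> indicat_real U y"
    proof (rule AE_I2)
      fix y
      show "(\<lambda>k. indicator U (y + t k) * indicator U y) \<longlonglongrightarrow> indicat_real U y"
      proof (cases "y \<in> U")
        case True
        have "(\<lambda>k. y + t k) \<longlonglongrightarrow> y" using tendsto_add[OF tendsto_const t] by simp
        then have "eventually (\<lambda>k. y + t k \<in> U) sequentially"
          using True U by (intro topological_tendstoD) auto
        then have "eventually (\<lambda>k. indicator U (y + t k) * indicator U y = indicat_real U y)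
            sequentially"
          by eventually_elim (use True in auto)
        then show ?thesis by (rule tendsto_eventually)
      qed simp
    qed
    show "AE y in lborel. norm (indicator U (y + t k) * indicator U y :: real) \<le> indicator U y"
      for k
      by (intro AE_I2) (auto simp: indicator_def)
    show "(\<lambda>y. indicator U (y + t k) * indicat_real U y) \<in> borel_measurable lborel" for k
      by measurable
  qed measurable
  then show ?thesis using U by (simp add: less_top)
qed

text \<open>The boundary of an open set may have positive measure, so the integrand of
  translate_dist need not converge pointwise; the overlap integral does.\<close>

lemma tendsto_translate_dist_open:
  fixes U :: "real set" and t :: "nat \<Rightarrow> real"
  assumes U: "open U" "emeasure lborel U < \<infinity>" and t: "t \<longlonglongrightarrow> 0"
  shows "(\<lambda>k. translate_dist (indicator U) (t k)) \<longlonglongrightarrow> 0"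
proof -
  have iU: "integrable lborel (indicat_real U)" using U by (simp add: integrable_indicator_iff)
  have iUU: "integrable lborel (\<lambda>y. indicat_real U (y + s) * indicator U y)" for s
    by (rule integrable_real_mult_indicator) (use U iU in \<open>auto intro: integrable_lborel_shift\<close>)
  have "\<bar>indicator U (y + s) - indicator U y\<bar>
      = indicator U (y + s) + indicator U y - 2 * (indicat_real U (y + s) * indicator U y)" for y s
    by (auto simp: indicator_def)
  then have "translate_dist (indicator U) s
      = 2 * measure lborel U - 2 * (\<integral>y. indicator U (y + s) * indicator U y \<partial>lborel)" for s
    unfolding translate_dist_def using iU iUU U
    by (simp add: integrable_lborel_shift integral_lborel_shift[of "indicat_real U"] less_top)
  moreover have "(\<lambda>k. 2 * measure lborel U
      - 2 * (\<integral>y. indicator U (y + t k) * indicator U y \<partial>lborel))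
      \<longlonglongrightarrow> 2 * measure lborel U - 2 * measure lborel U"
    by (intro tendsto_intros tendsto_overlap_open U t)
  ultimately show ?thesis by simp
qed

lemma tendsto_translate_dist_approx:
  fixes f :: "real \<Rightarrow> real" and t :: "nat \<Rightarrow> real"
  assumes f: "integrable lborel f"
    and approx: "\<And>e. 0 < e \<Longrightarrow> \<exists>g. integrable lborel g \<and> (\<integral>y. \<bar>f y - g y\<bar> \<partial>lborel) < e
                     \<and> (\<lambda>k. translate_dist g (t k)) \<longlonglongrightarrow> 0"
  shows "(\<lambda>k. translate_dist f (t k)) \<longlonglongrightarrow> 0"
proof (rule LIMSEQ_I)
  fix e :: real assume "0 < e"
  then obtain g where g: "integrable lborel g" "(\<integral>y. \<bar>f y - g y\<bar> \<partial>lborel) < e / 4"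
    and lim: "(\<lambda>k. translate_dist g (t k)) \<longlonglongrightarrow> 0"
    using approx[of "e / 4"] by auto
  obtain N where N: "\<forall>k\<ge>N. norm (translate_dist g (t k) - 0) < e / 2"
    using LIMSEQ_D[OF lim] \<open>0 < e\<close> by (meson half_gt_zero)
  have "norm (translate_dist f (t k) - 0) < e" if "k \<ge> N" for k
    using translate_dist_le[OF f g(1), of "t k"] N[rule_format, OF that] g(2)
    by (simp add: abs_of_nonneg translate_dist_nonneg)
  then show "\<exists>N. \<forall>k\<ge>N. norm (translate_dist f (t k) - 0) < e" by blast
qed

lemma tendsto_L1_dist_dominated:
  fixes f :: "real \<Rightarrow> real"
  assumes s: "\<And>i. integrable lborel (s i)" and f: "integrable lborel f"
    and lim: "\<And>x. (\<lambda>i. s i x) \<longlonglongrightarrow> f x" and bound: "\<And>i x. \<bar>s i x\<bar> \<le> 2 * \<bar>f x\<bar>"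
  shows "(\<lambda>i. \<integral>y. \<bar>f y - s i y\<bar> \<partial>lborel) \<longlonglongrightarrow> 0"
proof -
  have "(\<lambda>i. \<integral>y. \<bar>f y - s i y\<bar> \<partial>lborel) \<longlonglongrightarrow> (\<integral>y. 0 \<partial>(lborel :: real measure))"
  proof (rule integral_dominated_convergence[where w = "\<lambda>y. 3 * \<bar>f y\<bar>"])
    show "AE y in lborel. (\<lambda>i. \<bar>f y - s i y\<bar>) \<longlonglongrightarrow> 0"
    proof (rule AE_I2)
      fix y
      show "(\<lambda>i. \<bar>f y - s i y\<bar>) \<longlonglongrightarrow> 0"
        using tendsto_rabs[OF tendsto_diff[OF tendsto_const[of "f y"] lim[of y]]] by simp
    qed
    show "AE y in lborel. norm \<bar>f y - s i y\<bar> \<le> 3 * \<bar>f y\<bar>" for i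
    proof (rule AE_I2)
      fix y
      show "norm \<bar>f y - s i y\<bar> \<le> 3 * \<bar>f y\<bar>"
        using bound[of i y] abs_triangle_ineq4[of "f y" "s i y"] by simp
    qed
  qed (use s f in auto)
  then show ?thesis by simp
qed

lemma tendsto_translate_dist_indicator:
  fixes A :: "real set" and t :: "nat \<Rightarrow> real"
  assumes A: "A \<in> sets lborel" "emeasure lborel A < \<infinity>" and t: "t \<longlonglongrightarrow> 0"
  shows "(\<lambda>k. translate_dist (indicator A) (t k)) \<longlonglongrightarrow> 0"
proof (rule tendsto_translate_dist_approx)
  show "integrable lborel (indicat_real A)" using A by (simp add: integrable_indicator_iff)
  fix e :: real assume "0 < e"
  moreover have "A \<in> sets borel" using A(1) by simp
  ultimately obtain U where U: "open U" "A \<subseteq> U" "emeasure lborel (U - A) < e"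
    using outer_regular_lborel by metis
  have finUA: "emeasure lborel (U - A) < \<infinity>"
    using order.strict_trans[OF U(3) ennreal_less_top] by simp
  have "emeasure lborel U \<le> emeasure lborel A + emeasure lborel (U - A)"
    using emeasure_subadditive[of A lborel "U - A"] U A(1) by (simp add: Un_absorb1)
  also have "\<dots> < \<infinity>"
    using A(2) finUA by (simp add: ennreal_add_less_top)
  finally have finU: "emeasure lborel U < \<infinity>" .
  have "\<bar>indicator A y - indicator U y\<bar> = indicat_real (U - A) y" for y
    using U(2) by (auto simp: indicator_def)
  then have "(\<integral>y. \<bar>indicator A y - indicator U y\<bar> \<partial>lborel) < e"
    using U(1,3) A(1) finUA by (simp add: measure_def)
  then show "\<exists>g. integrable lborel g \<and> (\<integral>y. \<bar>indicator A y - g y\<bar> \<partial>lborel) < e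
        \<and> (\<lambda>k. translate_dist g (t k)) \<longlonglongrightarrow> 0"
    using finU U(1) tendsto_translate_dist_open[OF U(1) finU t]
    by (intro exI[of _ "indicator U"]) (simp add: integrable_indicator_iff)
qed

lemma tendsto_translate_dist:
  fixes f :: "real \<Rightarrow> real" and t :: "nat \<Rightarrow> real"
  assumes "integrable lborel f" and t: "t \<longlonglongrightarrow> 0"
  shows "(\<lambda>k. translate_dist f (t k)) \<longlonglongrightarrow> 0"
  using assms(1)
proof (induction rule: integrable_induct)
  case (base A c)
  have "translate_dist (\<lambda>x. indicator A x *\<^sub>R c) s = \<bar>c\<bar> * translate_dist (indicator A) s" for s
    using translate_dist_mult_left[of c "indicator A" s] by (simp add: mult.commute)
  then show ?case
    using tendsto_mult_right_zero[OF tendsto_translate_dist_indicator[OF base t], of "\<bar>c\<bar>"]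
    by (simp add: mult.commute)
next
  case (add f g)
  show ?case
  proof (rule Lim_null_comparison)
    show "(\<lambda>k. translate_dist f (t k) + translate_dist g (t k)) \<longlonglongrightarrow> 0"
      using tendsto_add[OF add.IH] by simp
    show "\<forall>\<^sub>F k in sequentially. norm (translate_dist (\<lambda>x. f x + g x) (t k))
        \<le> translate_dist f (t k) + translate_dist g (t k)"
      using translate_dist_add_le[OF add.hyps] by (simp add: translate_dist_nonneg)
  qed
next
  case (lim f s)
  show ?case
  proof (rule tendsto_translate_dist_approx[OF lim.hyps(4)])
    fix e :: real assume "0 < e"
    have "(\<lambda>i. \<integral>y. \<bar>f y - s i y\<bar> \<partial>lborel) \<longlonglongrightarrow> 0"
      using lim.hyps by (intro tendsto_L1_dist_dominated) auto
    then obtain i where "(\<integral>y. \<bar>f y - s i y\<bar> \<partial>lborel) < e"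
      using LIMSEQ_D[OF _ \<open>0 < e\<close>] by fastforce
    then show "\<exists>g. integrable lborel g \<and> (\<integral>y. \<bar>f y - g y\<bar> \<partial>lborel) < e
          \<and> (\<lambda>k. translate_dist g (t k)) \<longlonglongrightarrow> 0"
      using lim.hyps(1) lim.IH by blast
  qed
qed

section \<open>Oscillating integrals against a density\<close>

lemma integrable_bounded_mult:
  fixes f \<phi> :: "'a \<Rightarrow> real"
  assumes f: "integrable M f" and \<phi>: "\<phi> \<in> borel_measurable M" and bound: "\<And>x. \<bar>\<phi> x\<bar> \<le> B"
  shows "integrable M (\<lambda>x. \<phi> x * f x)"
proof (rule Bochner_Integration.integrable_bound)
  show "integrable M (\<lambda>x. B * \<bar>f x\<bar>)" using f by simp
  show "(\<lambda>x. \<phi> x * f x) \<in> borel_measurable M" using \<phi> f by measurable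
  have "0 \<le> B" using abs_ge_zero bound order_trans by blast
  then show "AE x in M. norm (\<phi> x * f x) \<le> norm (B * \<bar>f x\<bar>)"
    by (intro AE_I2) (simp add: abs_mult mult_right_mono[OF bound])
qed

lemma integral_shift_le_add_translate_dist:
  fixes f \<phi> :: "real \<Rightarrow> real"
  assumes f: "integrable lborel f" and \<phi>: "\<phi> \<in> borel_measurable lborel" and bound: "\<And>y. \<bar>\<phi> y\<bar> \<le> 1"
  shows "(\<integral>y. \<phi> (y + s) * f y \<partial>lborel) \<le> (\<integral>y. \<phi> y * f y \<partial>lborel) + translate_dist f (- s)"
proof -
  have int_shift: "integrable lborel (\<lambda>y. \<phi> y * f (y + - s))"
    by (rule integrable_bounded_mult[OF integrable_lborel_shift[OF f] \<phi> bound])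
  have int: "integrable lborel (\<lambda>y. \<phi> y * f y)"
    by (rule integrable_bounded_mult[OF f \<phi> bound])
  have "(\<integral>y. \<phi> (y + s) * f y \<partial>lborel) = (\<integral>y. \<phi> y * f (y + - s) \<partial>lborel)"
    using integral_lborel_shift[of "\<lambda>y. \<phi> y * f (y + - s)" s] by simp
  also have "\<dots> = (\<integral>y. \<phi> y * f y \<partial>lborel) + (\<integral>y. \<phi> y * (f (y + - s) - f y) \<partial>lborel)"
    using int_shift int by (simp add: right_diff_distrib)
  also have "(\<integral>y. \<phi> y * (f (y + - s) - f y) \<partial>lborel) \<le> translate_dist f (- s)"
    unfolding translate_dist_def
  proof (rule integral_mono)
    show "integrable lborel (\<lambda>y. \<phi> y * (f (y + - s) - f y))"
      using int_shift int by (simp add: right_diff_distrib)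
    show "integrable lborel (\<lambda>y. \<bar>f (y + - s) - f y\<bar>)"
      by (rule integrable_translate_diff[OF f])
    fix y
    have "\<phi> y * (f (y + - s) - f y) \<le> \<bar>\<phi> y\<bar> * \<bar>f (y + - s) - f y\<bar>"
      by (metis abs_ge_self abs_mult)
    also have "\<dots> \<le> \<bar>f (y + - s) - f y\<bar>"
      using mult_right_mono[OF bound[of y] abs_ge_zero] by simp
    finally show "\<phi> y * (f (y + - s) - f y) \<le> \<bar>f (y + - s) - f y\<bar>" .
  qed
  finally show ?thesis by simp
qed

lemma periodic_integral_lower_bound:
  fixes f g :: "real \<Rightarrow> real" and a c L :: real and m :: nat
  assumes lip: "L-lipschitz_on UNIV g" and periodic: "\<And>t. g (t + 1) = g t"
    and bound: "\<And>t. \<bar>g t\<bar> \<le> 1"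
    and f: "integrable lborel f" and f_nonneg: "\<And>y. 0 \<le> f y" and f_int: "(\<integral>y. f y \<partial>lborel) = 1"
    and m: "0 < m" and a: "0 < a"
  shows "integral {0..1} g - L / real m
           - (\<Sum>k<m. translate_dist f (- (real k / (real m * a)))) / real m
         \<le> (\<integral>y. g (a * y - c) * f y \<partial>lborel)"
proof -
  define \<phi> where "\<phi> y = g (a * y - c)" for y
  define s where "s k = real k / (real m * a)" for k
  have cont: "continuous_on UNIV g" using lip by (rule lipschitz_on_continuous_on)
  have \<phi>_shift: "\<phi> (y + s k) = g ((a * y - c) + real k / real m)" for y k
  proof -
    have "a * (y + s k) - c = (a * y - c) + real k / real m"
      unfolding s_def using m a by (simp add: field_simps)
    then show ?thesis unfolding \<phi>_def by (simp only:)
  qed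
  have \<phi>_meas: "\<phi> \<in> borel_measurable lborel" "(\<lambda>y. \<phi> (y + s k)) \<in> borel_measurable lborel" for k
    unfolding \<phi>_def by (intro borel_measurable_continuous_on[OF cont], measurable)+
  have \<phi>_bound: "\<bar>\<phi> y\<bar> \<le> 1" for y
    unfolding \<phi>_def by (rule bound)
  have int_k: "integrable lborel (\<lambda>y. \<phi> (y + s k) * f y)" for k
    by (rule integrable_bounded_mult[OF f \<phi>_meas(2) \<phi>_bound])
  have "integral {0..1} g - L / real m = (\<integral>y. (integral {0..1} g - L / real m) * f y \<partial>lborel)"
    using f_int by simp
  also have "\<dots> \<le> (\<integral>y. (\<Sum>k<m. \<phi> (y + s k) * f y) / real m \<partial>lborel)"
  proof (rule integral_mono)
    show "integrable lborel (\<lambda>y. (integral {0..1} g - L / real m) * f y)" using f by simp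
    show "integrable lborel (\<lambda>y. (\<Sum>k<m. \<phi> (y + s k) * f y) / real m)"
      using int_k by (intro integrable_divide integrable_sum) auto
    show "(integral {0..1} g - L / real m) * f y \<le> (\<Sum>k<m. \<phi> (y + s k) * f y) / real m" for y
      using mult_right_mono[OF riemann_sum_ge_periodic[OF lip periodic m, of "a * y - c"]
          f_nonneg[of y]]
      by (simp add: \<phi>_shift sum_distrib_right)
  qed
  also have "\<dots> = (\<Sum>k<m. \<integral>y. \<phi> (y + s k) * f y \<partial>lborel) / real m"
    using int_k by simp
  also have "\<dots> \<le> (\<Sum>k<m. (\<integral>y. \<phi> y * f y \<partial>lborel) + translate_dist f (- s k)) / real m"
    using integral_shift_le_add_translate_dist[OF f \<phi>_meas(1) \<phi>_bound]
    by (intro divide_right_mono sum_mono) auto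
  also have "\<dots> = (\<integral>y. \<phi> y * f y \<partial>lborel) + (\<Sum>k<m. translate_dist f (- s k)) / real m"
    using m by (simp add: sum.distrib add_divide_distrib)
  finally show ?thesis unfolding \<phi>_def s_def by simp
qed

lemma eventually_periodic_integral_gt:
  fixes f g :: "real \<Rightarrow> real" and c :: "nat \<Rightarrow> real"
  assumes lip: "L-lipschitz_on UNIV g" and periodic: "\<And>t. g (t + 1) = g t"
    and bound: "\<And>t. \<bar>g t\<bar> \<le> 1"
    and f: "integrable lborel f" and f_nonneg: "\<And>y. 0 \<le> f y" and f_int: "(\<integral>y. f y \<partial>lborel) = 1"
    and e: "0 < e"
  shows "eventually (\<lambda>n. integral {0..1} g - e < (\<integral>y. g (real n * y - c n) * f y \<partial>lborel))
           sequentially"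
proof -
  obtain m :: nat where m_gt: "2 * L / e < real m"
    using reals_Archimedean2 by blast
  have "0 \<le> 2 * L / e" using lipschitz_on_nonneg[OF lip] e by simp
  then have m: "0 < m" using m_gt by linarith
  have L_m: "L / real m < e / 2" using m_gt m e by (simp add: field_simps)
  have "(\<lambda>n. - (real k / (real m * real n))) \<longlonglongrightarrow> 0" for k
    using tendsto_mult[OF tendsto_const lim_inverse_n', of "- real k / real m"] by simp
  then have "(\<lambda>n. (\<Sum>k<m. translate_dist f (- (real k / (real m * real n)))) / real m)
      \<longlonglongrightarrow> (\<Sum>k<m. 0) / real m"
    using m by (intro tendsto_intros tendsto_translate_dist[OF f]) auto
  then have "eventually
      (\<lambda>n. (\<Sum>k<m. translate_dist f (- (real k / (real m * real n)))) / real m < e / 2) sequentially"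
    using e by (intro order_tendstoD(2)) auto
  then show ?thesis using eventually_gt_at_top[of 0]
  proof eventually_elim
    case (elim n)
    with periodic_integral_lower_bound[OF lip periodic bound f f_nonneg f_int m, of "real n" "c n"]
    show ?case using L_m by simp
  qed
qed

section \<open>Couplings and the Wasserstein distance\<close>

lemma powr_abs_diff_le:
  fixes x y p :: real
  assumes "0 \<le> p"
  shows "\<bar>x - y\<bar> powr p \<le> 2 powr p * (\<bar>x\<bar> powr p + \<bar>y\<bar> powr p)"
proof -
  have "\<bar>x - y\<bar> \<le> 2 * max \<bar>x\<bar> \<bar>y\<bar>" by linarith
  then have "\<bar>x - y\<bar> powr p \<le> (2 * max \<bar>x\<bar> \<bar>y\<bar>) powr p"
    using assms by (intro powr_mono2) auto
  also have "\<dots> = 2 powr p * max \<bar>x\<bar> \<bar>y\<bar> powr p"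
    by (simp add: powr_mult)
  also have "max \<bar>x\<bar> \<bar>y\<bar> powr p \<le> \<bar>x\<bar> powr p + \<bar>y\<bar> powr p"
    by (cases "\<bar>x\<bar> \<le> \<bar>y\<bar>") (simp_all add: max_def)
  finally show ?thesis by simp
qed

lemma (in prob_space) distr_pair_snd:
  assumes "sigma_finite_measure N"
  shows "distr (M \<Otimes>\<^sub>M N) N snd = N"
proof (intro measure_eqI)
  interpret N: sigma_finite_measure N by (rule assms)
  interpret pair_sigma_finite M N ..
  fix A assume A: "A \<in> sets (distr (M \<Otimes>\<^sub>M N) N snd)"
  then have "emeasure (distr (M \<Otimes>\<^sub>M N) N snd) A = emeasure (M \<Otimes>\<^sub>M N) (space M \<times> A)"
    by (auto simp: emeasure_distr space_pair_measure dest: sets.sets_into_space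
        intro!: arg_cong2[where f = emeasure])
  with A show "emeasure (distr (M \<Otimes>\<^sub>M N) N snd) A = emeasure N A"
    by (simp add: N.emeasure_pair_measure_Times emeasure_space_1)
qed simp

lemma coupling_pair_measure:
  assumes \<mu>: "real_distribution \<mu>" and \<nu>: "real_distribution \<nu>"
  shows "coupling (\<mu> \<Otimes>\<^sub>M \<nu>) \<mu> \<nu>"
proof -
  interpret \<mu>: real_distribution \<mu> by (rule \<mu>)
  interpret \<nu>: real_distribution \<nu> by (rule \<nu>)
  have "distr (\<mu> \<Otimes>\<^sub>M \<nu>) borel fst = distr (\<mu> \<Otimes>\<^sub>M \<nu>) \<mu> fst"
    by (rule distr_cong) auto
  also have "\<dots> = \<mu>" by (rule \<nu>.distr_pair_fst)
  finally have fst: "distr (\<mu> \<Otimes>\<^sub>M \<nu>) borel fst = \<mu>" .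
  have "distr (\<mu> \<Otimes>\<^sub>M \<nu>) borel snd = distr (\<mu> \<Otimes>\<^sub>M \<nu>) \<nu> snd"
    by (rule distr_cong) auto
  also have "\<dots> = \<nu>" by (rule \<mu>.distr_pair_snd) unfold_locales
  finally have snd: "distr (\<mu> \<Otimes>\<^sub>M \<nu>) borel snd = \<nu>" .
  have "prob_space (\<mu> \<Otimes>\<^sub>M \<nu>)"
    by (rule prob_space_pair[OF \<mu>.prob_space_axioms \<nu>.prob_space_axioms])
  moreover have "sets (\<mu> \<Otimes>\<^sub>M \<nu>) = sets (borel \<Otimes>\<^sub>M borel)"
    by (rule sets_pair_measure_cong[OF \<mu>.events_eq_borel \<nu>.events_eq_borel])
  ultimately show ?thesis
    unfolding coupling_def using fst snd by blast
qed

lemma coupling_borel_measurable_iff: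
  assumes "coupling \<gamma> \<mu> \<nu>"
  shows "h \<in> borel_measurable \<gamma> \<longleftrightarrow> h \<in> borel_measurable (borel \<Otimes>\<^sub>M borel)"
proof -
  have "sets \<gamma> = sets (borel \<Otimes>\<^sub>M borel)" using assms unfolding coupling_def by simp
  then have "borel_measurable \<gamma> = borel_measurable (borel \<Otimes>\<^sub>M borel)"
    by (rule measurable_cong_sets) (rule refl)
  then show ?thesis by (rule arg_cong)
qed

lemma coupling_integrable_cost:
  assumes \<gamma>: "coupling \<gamma> \<mu> \<nu>" and p: "0 \<le> p"
    and \<mu>: "integrable \<mu> (\<lambda>x. \<bar>x\<bar> powr p)" and \<nu>: "integrable \<nu> (\<lambda>x. \<bar>x\<bar> powr p)"
  shows "integrable \<gamma> (\<lambda>z. \<bar>fst z - snd z\<bar> powr p)"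
proof (rule Bochner_Integration.integrable_bound)
  have fst: "fst \<in> \<gamma> \<rightarrow>\<^sub>M borel" and snd: "snd \<in> \<gamma> \<rightarrow>\<^sub>M borel"
    using coupling_borel_measurable_iff[OF \<gamma>] by auto
  have mom: "(\<lambda>x::real. \<bar>x\<bar> powr p) \<in> borel_measurable borel" by measurable
  have "integrable \<gamma> (\<lambda>z. \<bar>fst z\<bar> powr p)"
    using \<mu> \<gamma> integrable_distr_eq[OF fst mom] unfolding coupling_def by simp
  moreover have "integrable \<gamma> (\<lambda>z. \<bar>snd z\<bar> powr p)"
    using \<nu> \<gamma> integrable_distr_eq[OF snd mom] unfolding coupling_def by simp
  ultimately show "integrable \<gamma> (\<lambda>z. 2 powr p * (\<bar>fst z\<bar> powr p + \<bar>snd z\<bar> powr p))"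
    by (intro integrable_mult_right Bochner_Integration.integrable_add)
  show "(\<lambda>z. \<bar>fst z - snd z\<bar> powr p) \<in> borel_measurable \<gamma>"
    unfolding coupling_borel_measurable_iff[OF \<gamma>] by measurable
  show "AE z in \<gamma>. norm (\<bar>fst z - snd z\<bar> powr p)
      \<le> norm (2 powr p * (\<bar>fst z\<bar> powr p + \<bar>snd z\<bar> powr p))"
    using powr_abs_diff_le[OF p] by (intro AE_I2) simp
qed

lemma wasserstein_ge:
  assumes p: "0 < p" and C: "0 \<le> C"
    and ex: "\<exists>\<gamma>. coupling \<gamma> \<mu> \<nu> \<and> integrable \<gamma> (\<lambda>z. \<bar>fst z - snd z\<bar> powr p)"
    and lower: "\<And>\<gamma>. coupling \<gamma> \<mu> \<nu> \<Longrightarrow> integrable \<gamma> (\<lambda>z. \<bar>fst z - snd z\<bar> powr p)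
                  \<Longrightarrow> C \<le> (\<integral>z. \<bar>fst z - snd z\<bar> powr p \<partial>\<gamma>)"
  shows "C powr (1 / p) \<le> wasserstein p \<mu> \<nu>"
  unfolding wasserstein_def
proof (rule cInf_greatest)
  show "{(\<integral>z. \<bar>fst z - snd z\<bar> powr p \<partial>\<gamma>) powr (1 / p) | \<gamma>.
      coupling \<gamma> \<mu> \<nu> \<and> integrable \<gamma> (\<lambda>z. \<bar>fst z - snd z\<bar> powr p)} \<noteq> {}"
    using ex by blast
  fix x assume "x \<in> {(\<integral>z. \<bar>fst z - snd z\<bar> powr p \<partial>\<gamma>) powr (1 / p) | \<gamma>.
      coupling \<gamma> \<mu> \<nu> \<and> integrable \<gamma> (\<lambda>z. \<bar>fst z - snd z\<bar> powr p)}"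
  then obtain \<gamma> where x: "x = (\<integral>z. \<bar>fst z - snd z\<bar> powr p \<partial>\<gamma>) powr (1 / p)"
    and \<gamma>: "coupling \<gamma> \<mu> \<nu>" "integrable \<gamma> (\<lambda>z. \<bar>fst z - snd z\<bar> powr p)"
    by blast
  show "C powr (1 / p) \<le> x"
    unfolding x using lower[OF \<gamma>] C p by (intro powr_mono2) auto
qed

lemma coupling_cost_ge_lattice:
  assumes \<gamma>: "coupling \<gamma> \<mu> \<nu>" and int: "integrable \<gamma> (\<lambda>z. \<bar>fst z - snd z\<bar> powr p)"
    and p: "0 \<le> p" and a: "0 < a" and lattice: "AE x in \<mu>. a * (x - b) \<in> \<int>"
  shows "(\<integral>y. sawtooth p (a * y - a * b) \<partial>\<nu>) / a powr p \<le> (\<integral>z. \<bar>fst z - snd z\<bar> powr p \<partial>\<gamma>)"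
proof -
  interpret prob_space \<gamma> using \<gamma> unfolding coupling_def by simp
  have fst: "fst \<in> \<gamma> \<rightarrow>\<^sub>M borel" and snd: "snd \<in> \<gamma> \<rightarrow>\<^sub>M borel"
    using coupling_borel_measurable_iff[OF \<gamma>] by auto
  define h where "h y = sawtooth p (a * y - a * b) / a powr p" for y
  have h_meas: "h \<in> borel_measurable borel" unfolding h_def by measurable
  have "\<bar>h y\<bar> \<le> 1 / a powr p" for y
    unfolding h_def using a sawtooth_nonneg[of p] sawtooth_le_1[OF p]
    by (simp add: divide_right_mono)
  then have int_h: "integrable \<gamma> (\<lambda>z. h (snd z))"
    using measurable_compose[OF snd h_meas]
    by (intro integrable_const_bound[where B = "1 / a powr p"]) auto
  have "AE z in \<gamma>. a * (fst z - b) \<in> \<int>"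
    using AE_distrD[OF fst] lattice \<gamma> unfolding coupling_def by auto
  then have "AE z in \<gamma>. h (snd z) \<le> \<bar>fst z - snd z\<bar> powr p"
    by eventually_elim (simp add: h_def sawtooth_le_lattice_dist[OF a p])
  then have "(\<integral>z. h (snd z) \<partial>\<gamma>) \<le> (\<integral>z. \<bar>fst z - snd z\<bar> powr p \<partial>\<gamma>)"
    by (rule integral_mono_AE[OF int_h int])
  also have "(\<integral>z. h (snd z) \<partial>\<gamma>) = (\<integral>y. h y \<partial>\<nu>)"
    using integral_distr[OF snd h_meas] \<gamma> unfolding coupling_def by simp
  finally show ?thesis unfolding h_def by simp
qed

lemma wasserstein_ge_lattice:
  assumes p: "0 < p" and \<mu>: "real_distribution \<mu>" and \<nu>: "real_distribution \<nu>"
    and \<mu>_moment: "integrable \<mu> (\<lambda>x. \<bar>x\<bar> powr p)" and \<nu>_moment: "integrable \<nu> (\<lambda>x. \<bar>x\<bar> powr p)"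
    and a: "0 < a" and lattice: "AE x in \<mu>. a * (x - b) \<in> \<int>"
  shows "(\<integral>y. sawtooth p (a * y - a * b) \<partial>\<nu>) powr (1 / p) / a \<le> wasserstein p \<mu> \<nu>"
proof -
  define E where "E = (\<integral>y. sawtooth p (a * y - a * b) \<partial>\<nu>)"
  have E: "0 \<le> E" unfolding E_def by (simp add: sawtooth_nonneg)
  have "(E / a powr p) powr (1 / p) \<le> wasserstein p \<mu> \<nu>"
  proof (rule wasserstein_ge[OF p])
    show "0 \<le> E / a powr p" using E by simp
    show "\<exists>\<gamma>. coupling \<gamma> \<mu> \<nu> \<and> integrable \<gamma> (\<lambda>z. \<bar>fst z - snd z\<bar> powr p)"
      using coupling_pair_measure[OF \<mu> \<nu>] coupling_integrable_cost[OF _ _ \<mu>_moment \<nu>_moment] p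
      by (meson less_imp_le)
    show "E / a powr p \<le> (\<integral>z. \<bar>fst z - snd z\<bar> powr p \<partial>\<gamma>)"
      if "coupling \<gamma> \<mu> \<nu>" "integrable \<gamma> (\<lambda>z. \<bar>fst z - snd z\<bar> powr p)" for \<gamma>
      unfolding E_def using coupling_cost_ge_lattice[OF that _ a lattice] p by simp
  qed
  moreover have "(E / a powr p) powr (1 / p) = E powr (1 / p) / a"
    using E a p by (simp add: powr_divide powr_powr)
  ultimately show ?thesis unfolding E_def by simp
qed

lemma real_distribution_density:
  assumes \<nu>: "real_distribution \<nu>" and ac: "absolutely_continuous lborel \<nu>"
  obtains f where "f \<in> borel_measurable lborel" "\<And>x. 0 \<le> f x"
    and "\<nu> = density lborel (\<lambda>x. ennreal (f x))"
    and "integrable lborel f" "(\<integral>x. f x \<partial>lborel) = 1"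
proof -
  interpret real_distribution \<nu> by (rule \<nu>)
  have sets: "sets \<nu> = sets lborel" by simp
  obtain f where f_meas: "f \<in> borel_measurable lborel"
    and f_RN: "AE x in lborel. RN_deriv lborel \<nu> x = ennreal (f x)"
    and "AE x in \<nu>. 0 < f x" and f_nonneg: "\<And>x. 0 \<le> f x"
    by (rule sigma_finite_measure.real_RN_deriv[OF lborel.sigma_finite_measure_axioms
        finite_measure_axioms ac sets]) blast
  have "\<nu> = density lborel (RN_deriv lborel \<nu>)"
    using sigma_finite_measure.density_RN_deriv[OF lborel.sigma_finite_measure_axioms ac sets]
    by simp
  also have "\<dots> = density lborel (\<lambda>x. ennreal (f x))"
    using f_RN f_meas by (intro density_cong) auto
  finally have \<nu>_eq: "\<nu> = density lborel (\<lambda>x. ennreal (f x))" .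
  have "integrable \<nu> (\<lambda>_. 1::real)" by simp
  then have int: "integrable lborel f"
    using integrable_density[OF borel_measurable_const f_meas, of "1::real"] f_nonneg \<nu>_eq by simp
  have "(\<integral>x. f x \<partial>lborel) = (\<integral>x. 1 \<partial>\<nu>)"
    using integral_density[OF borel_measurable_const f_meas, of "1::real"] f_nonneg \<nu>_eq by simp
  also have "\<dots> = 1" using prob_space by simp
  finally show ?thesis using that f_meas f_nonneg \<nu>_eq int by blast
qed

lemma ereal_powr_le_liminf:
  fixes E x :: "nat \<Rightarrow> real"
  assumes p: "0 < p" and H: "0 < H"
    and E: "\<And>e. 0 < e \<Longrightarrow> eventually (\<lambda>n. H - e < E n) sequentially"
    and x: "eventually (\<lambda>n. E n powr (1 / p) \<le> x n) sequentially"
  shows "ereal (H powr (1 / p)) \<le> liminf (\<lambda>n. ereal (x n))"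
  unfolding le_Liminf_iff
proof (intro allI impI)
  fix y assume "y < ereal (H powr (1 / p))"
  then obtain z where z: "y < ereal z" "z < H powr (1 / p)"
    using ereal_dense2 by fastforce
  define r where "r = max z (H powr (1 / p) / 2)"
  have "ereal z \<le> ereal r" unfolding r_def by simp
  then have r: "y < ereal r" "0 < r" "r < H powr (1 / p)"
    using z H by (auto simp: r_def less_max_iff_disj)
  have r_p: "(r powr p) powr (1 / p) = r" using r p by (simp add: powr_powr)
  have "r powr p < (H powr (1 / p)) powr p" using r p by (intro powr_less_mono2) auto
  then have "r powr p < H" using H p by (simp add: powr_powr)
  then have "eventually (\<lambda>n. r powr p < E n) sequentially"
    using E[of "H - r powr p"] by simp
  then show "eventually (\<lambda>n. y < ereal (x n)) sequentially"
    using x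
  proof eventually_elim
    case (elim n)
    have "r < E n powr (1 / p)"
      using powr_less_mono2[of "1 / p" "r powr p" "E n"] elim(1) p r_p by simp
    then show ?case using elim(2) r(1) by (simp add: order_less_le_trans)
  qed
qed

theorem proposition4p1:
  fixes p :: real and \<mu> :: "nat \<Rightarrow> real measure" and \<nu> :: "real measure"
    and b :: "nat \<Rightarrow> real"
  assumes p: "1 \<le> p"
    and W: "real_distribution \<nu>" "integrable \<nu> (\<lambda>x. \<bar>x\<bar> powr p)"
    and W_ac: "absolutely_continuous lborel \<nu>"
    and Wn: "\<And>n. n \<ge> 1 \<Longrightarrow> real_distribution (\<mu> n)"
    and Wn_mom: "\<And>n. n \<ge> 1 \<Longrightarrow> integrable (\<mu> n) (\<lambda>x. \<bar>x\<bar> powr p)"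
    and lattice: "\<And>n. n \<ge> 1 \<Longrightarrow> (AE x in \<mu> n. real n * (x - b n) \<in> \<int>)"
  shows "liminf (\<lambda>n. ereal (real n * wasserstein p (\<mu> n) \<nu>))
           \<ge> ereal (1 / 2 * (p + 1) powr (- 1 / p))"
proof -
  obtain f where f_meas: "f \<in> borel_measurable lborel" and f_nonneg: "\<And>x. 0 \<le> f x"
    and \<nu>_density: "\<nu> = density lborel (\<lambda>x. ennreal (f x))"
    and f_int: "integrable lborel f" and f_total: "(\<integral>x. f x \<partial>lborel) = 1"
    using real_distribution_density[OF W(1) W_ac] by blast
  define E where "E n = (\<integral>y. sawtooth p (real n * y - real n * b n) \<partial>\<nu>)" for n
  define H where "H = (1/2) powr p / (p + 1)"
  have "E n = (\<integral>y. sawtooth p (real n * y - real n * b n) * f y \<partial>lborel)" for n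
    unfolding E_def \<nu>_density using f_meas f_nonneg
    by (subst integral_density) (auto simp: mult.commute)
  then have E_gt: "eventually (\<lambda>n. H - e < E n) sequentially" if "0 < e" for e
    using eventually_periodic_integral_gt[OF sawtooth_lipschitz[OF p] sawtooth_add_1 _
        f_int f_nonneg f_total that, of "\<lambda>n. real n * b n"]
      sawtooth_nonneg sawtooth_le_1 p
    unfolding integral_sawtooth[OF p] H_def by simp
  have "eventually (\<lambda>n. E n powr (1 / p) \<le> real n * wasserstein p (\<mu> n) \<nu>) sequentially"
    using eventually_ge_at_top[of 1]
  proof eventually_elim
    case (elim n)
    then show ?case
      using wasserstein_ge_lattice[OF _ Wn W(1) Wn_mom W(2) _ lattice, of n] p
      unfolding E_def by (simp add: divide_le_eq mult.commute)
  qed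
  then have "ereal (H powr (1 / p)) \<le> liminf (\<lambda>n. ereal (real n * wasserstein p (\<mu> n) \<nu>))"
    using ereal_powr_le_liminf[OF _ _ E_gt] p unfolding H_def by simp
  moreover have "H powr (1 / p) = 1 / 2 * (p + 1) powr (- 1 / p)"
    using p unfolding H_def by (simp add: powr_divide powr_powr powr_minus_divide powr_mult)
  ultimately show ?thesis by simp
qed

end
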